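(* Let $q\neq-1$ be real and let $0\le j\le n$ be integers. Then $$\sum_{k=0}^{\lfloor n/2\rfloor}q^{\binom{n-2k}{2}}\begin{bmatrix} n\\ 2k\end{bmatrix}_q\begin{bmatrix} k\\ j\end{bmatrix}_{q^2}=\frac{(1+q)\cdots(1+q^{n-1})}{(1+q)\cdots(1+q^{j})\cdot(1+q^{n-j})\cdots(1+q^{n-1})}\,\frac{[n]_q}{[n-j]_q}\begin{bmatrix} n-j\\ j\end{bmatrix}_q$$ and $$\sum_{k=0}^{\lfloor n/2\rfloor}q^{\binom{n-2k}{2}}\begin{bmatrix} n+1\\ 2k+1\end{bmatrix}_q\begin{bmatrix} k\\ j\end{bmatrix}_{q^2}=(1+q^{j+1})\cdots(1+q^{n-j})\begin{bmatrix} n-j\\ j\end{bmatrix}_q.$$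
   Context: For a parameter $p$: $[m]_p=1+p+\cdots+p^{m-1}$, $[m]_p!=[1]_p\cdots[m]_p$, $\begin{bmatrix} m\\ i\end{bmatrix}_p=\frac{[m]_p!}{[i]_p![m-i]_p!}$ for $0\le i\le m$ and $0$ otherwise (in particular for $m<0$ or $i>m$). Empty products equal $1$; $\binom{0}{2}=\binom{1}{2}=0$. When $n=j=0$ the factor $\frac{[n]_q}{[n-j]_q}$ is read as $1$. *)

theory Defs
  imports Complex_Main
begin

definition qint :: "real \<Rightarrow> nat \<Rightarrow> real" where
  "qint p m = (\<Sum>i<m. p ^ i)"

definition qfact :: "real \<Rightarrow> nat \<Rightarrow> real" where
  "qfact p m = (\<Prod>i=1..m. qint p i)"

definition qbinom :: "real \<Rightarrow> nat \<Rightarrow> nat \<Rightarrow> real" where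
  "qbinom p m i = (if i \<le> m then qfact p m / (qfact p i * qfact p (m - i)) else 0)"

end

theory Submission
  imports Defs
begin

text \<open>
  Write w(N,m) = q^((N-m) choose 2) [N,m]_q and let E_N(j), O_N(j) be the sums over k of
  w(N,2k) [k,j]_{q^2} and w(N,2k+1) [k,j]_{q^2}. The q-Pascal rule
  w(N+1,m+1) = q^N w(N,m+1) + w(N,m), together with Pascal's rule in base q^2 for [k+1,j],
  gives O_{N+1} = q^N O_N + E_N and a companion recurrence for E_{N+1}; eliminating E yields
  a second-order recurrence for O_N(j) in N, with a shift in j. The expression
  (-q;q)_{n-2j} [n-j,j]_{q^2} satisfies the same recurrence and initial values, hence equals
  O_{n+1}(j), and the identity (-q;q)_{N-j} [N,j]_{q^2} = (1+q^(j+1))...(1+q^N) [N,j]_q turns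
  this into the second formula. The first follows from E_n = O_{n+1} - q^n O_n.
\<close>

lemma qint_0 [simp]: "qint p 0 = 0"
  by (simp add: qint_def)

lemma qint_Suc: "qint p (Suc m) = qint p m + p ^ m"
  by (simp add: qint_def)

lemma qint_add: "qint p (a + b) = qint p a + p ^ a * qint p b"
  by (induction b) (simp_all add: qint_Suc algebra_simps power_add)

lemma qint_geometric: "(1 - p) * qint p m = 1 - p ^ m"
proof (induction m)
  case (Suc m)
  have "(1 - p) * qint p (Suc m) = (1 - p) * qint p m + (1 - p) * p ^ m"
    by (simp add: qint_Suc algebra_simps)
  with Suc show ?case by (simp add: algebra_simps)
qed simp

lemma qint_double: "qint p (2 * k) = (1 + p ^ k) * qint p k"
  unfolding mult_2 qint_add by (simp add: algebra_simps)

lemma qint_power2_base: "(1 + p) * qint (p\<^sup>2) k = qint p (2 * k)"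
  by (induction k) (simp_all add: qint_Suc algebra_simps power_mult[symmetric] mult_2 power_add)

lemma power_eq_1_imp_plus_minus_1:
  fixes p :: real
  assumes "p ^ m = 1" "m > 0"
  shows "p = 1 \<or> p = -1"
  using power_eq_1_iff[OF assms(1)] assms(2) by auto

lemma qint_neq_0:
  assumes "p \<noteq> -1" "m > 0"
  shows "qint p m \<noteq> 0"
proof
  assume "qint p m = 0"
  show False
  proof (cases "p = 1")
    case True
    with \<open>qint p m = 0\<close> \<open>m > 0\<close> show False by (simp add: qint_def)
  next
    case False
    with \<open>qint p m = 0\<close> qint_geometric[of p m] have "p ^ m = 1" by simp
    with assms False show False using power_eq_1_imp_plus_minus_1 by blast
  qed
qed

lemma one_plus_power_neq_0:
  fixes p :: real
  assumes "p \<noteq> -1"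
  shows "1 + p ^ i \<noteq> 0"
proof
  assume "1 + p ^ i = 0"
  then have minus_1: "p ^ i = -1" by (simp add: eq_neg_iff_add_eq_0 add.commute)
  then have "p ^ (i * 2) = 1" by (simp add: power_mult)
  moreover have "i * 2 > 0" using minus_1 by (cases i) auto
  ultimately have "p = 1" using assms power_eq_1_imp_plus_minus_1 by blast
  with minus_1 show False by simp
qed

lemma power2_neq_minus_1: "(p::real)\<^sup>2 \<noteq> -1"
  by (smt (verit) zero_le_power2)

lemma qfact_0 [simp]: "qfact p 0 = 1"
  by (simp add: qfact_def)

lemma qfact_Suc: "qfact p (Suc m) = qfact p m * qint p (Suc m)"
  by (simp add: qfact_def prod.nat_ivl_Suc' mult.commute)

lemma qfact_neq_0: "p \<noteq> -1 \<Longrightarrow> qfact p m \<noteq> 0"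
  by (simp add: qfact_def qint_neq_0)

lemma qbinom_0_right: "p \<noteq> -1 \<Longrightarrow> qbinom p m 0 = 1"
  by (simp add: qbinom_def qfact_neq_0)

lemma qbinom_self: "p \<noteq> -1 \<Longrightarrow> qbinom p m m = 1"
  by (simp add: qbinom_def qfact_neq_0)

lemma qbinom_eq_0: "m < i \<Longrightarrow> qbinom p m i = 0"
  by (simp add: qbinom_def)

lemma qbinom_Suc_mult_qint:
  assumes "p \<noteq> -1" "i \<le> m"
  shows "qbinom p (Suc m) i * qint p (Suc m - i) = qint p (Suc m) * qbinom p m i"
  using assms qfact_neq_0[OF assms(1)] qint_neq_0[OF assms(1)]
  by (simp add: qbinom_def Suc_diff_le qfact_Suc field_simps)

lemma one_minus_power_mult_qbinom_Suc:
  assumes "p \<noteq> -1"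
  shows "(1 - p ^ Suc m) * qbinom p (Suc (j + m)) j = (1 - p ^ Suc (j + m)) * qbinom p (j + m) j"
proof -
  have "qbinom p (Suc (j + m)) j * qint p (Suc m) = qint p (Suc (j + m)) * qbinom p (j + m) j"
    using qbinom_Suc_mult_qint[OF assms, of j "j + m"] by (simp add: Suc_diff_le)
  then show ?thesis
    by (metis qint_geometric mult.assoc mult.commute)
qed

lemma qbinom_Suc_Suc:
  assumes "p \<noteq> -1"
  shows "qbinom p (Suc m) (Suc i) = qbinom p m i + p ^ Suc i * qbinom p m (Suc i)"
proof (cases "i < m")
  case True
  then obtain d where m: "m = Suc i + d" using less_imp_Suc_add by blast
  have "qint p (Suc m) = qint p (Suc i) + p ^ Suc i * qint p (Suc d)"
    using qint_add[of p "Suc i" "Suc d"] by (simp add: m)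
  with m show ?thesis
    using qfact_neq_0[OF assms] qint_neq_0[OF assms]
    by (simp add: qbinom_def qfact_Suc field_simps)
next
  case False
  then consider "i = m" | "m < i" by linarith
  then show ?thesis
    by cases (simp_all add: qbinom_self[OF assms] qbinom_eq_0)
qed

lemma qbinom_Suc_left:
  assumes "p \<noteq> -1"
  shows "qbinom p (Suc k) j = p ^ j * qbinom p k j + (if j = 0 then 0 else qbinom p k (j - 1))"
  using assms by (cases j) (simp_all add: qbinom_0_right qbinom_Suc_Suc add.commute)

definition neg_qpochhammer :: "real \<Rightarrow> nat \<Rightarrow> real" where
  "neg_qpochhammer q m = (\<Prod>i=1..m. 1 + q ^ i)"

lemma neg_qpochhammer_0 [simp]: "neg_qpochhammer q 0 = 1"
  by (simp add: neg_qpochhammer_def)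

lemma neg_qpochhammer_Suc: "neg_qpochhammer q (Suc m) = neg_qpochhammer q m * (1 + q ^ Suc m)"
  by (simp add: neg_qpochhammer_def prod.nat_ivl_Suc' mult.commute)

lemma neg_qpochhammer_neq_0: "q \<noteq> -1 \<Longrightarrow> neg_qpochhammer q m \<noteq> 0"
  by (simp add: neg_qpochhammer_def one_plus_power_neq_0)

lemma qfact_power2_base:
  "(1 + p) ^ k * qfact (p\<^sup>2) k = neg_qpochhammer p k * qfact p k"
proof (induction k)
  case (Suc k)
  have "(1 + p) ^ Suc k * qfact (p\<^sup>2) (Suc k)
      = (1 + p) ^ k * qfact (p\<^sup>2) k * ((1 + p) * qint (p\<^sup>2) (Suc k))"
    by (simp add: qfact_Suc)
  also have "\<dots> = neg_qpochhammer p k * qfact p k * ((1 + p ^ Suc k) * qint p (Suc k))"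
    by (simp only: Suc.IH qint_power2_base qint_double)
  finally show ?case by (simp add: qfact_Suc neg_qpochhammer_Suc)
qed simp

lemma neg_qpochhammer_add:
  "neg_qpochhammer q (j + m) = neg_qpochhammer q j * (\<Prod>i=j+1..j+m. 1 + q ^ i)"
  by (induction m) (simp_all add: neg_qpochhammer_Suc prod.nat_ivl_Suc')

lemma neg_qpochhammer_mult_qbinom_power2_base:
  assumes "p \<noteq> -1" "j \<le> N"
  shows "neg_qpochhammer p (N - j) * qbinom (p\<^sup>2) N j
       = (\<Prod>i=j+1..N. 1 + p ^ i) * qbinom p N j"
proof -
  define m where "m = N - j"
  have N: "N = j + m" using assms(2) by (simp add: m_def)
  have "1 + p \<noteq> 0" using one_plus_power_neq_0[OF assms(1), of 1] by simp
  then have qfact2: "qfact (p\<^sup>2) k = neg_qpochhammer p k * qfact p k / (1 + p) ^ k" for k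
    using qfact_power2_base[of p k] by (simp add: field_simps)
  show ?thesis
    using neg_qpochhammer_add[of p j m] qfact_neq_0[OF assms(1)]
      neg_qpochhammer_neq_0[OF assms(1)] \<open>1 + p \<noteq> 0\<close>
    unfolding N by (simp add: qbinom_def qfact2 power_add field_simps)
qed

definition weighted_qbinom :: "real \<Rightarrow> nat \<Rightarrow> nat \<Rightarrow> real" where
  "weighted_qbinom q N m = q ^ ((N - m) choose 2) * qbinom q N m"

text \<open>
  The sums run up to N instead of N div 2: this keeps the recurrences free of floor
  arithmetic, and the extra terms vanish by weighted_qbinom_eq_0.
\<close>

definition even_sum :: "real \<Rightarrow> nat \<Rightarrow> nat \<Rightarrow> real" where
  "even_sum q N j = (\<Sum>k\<le>N. weighted_qbinom q N (2 * k) * qbinom (q\<^sup>2) k j)"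

definition odd_sum :: "real \<Rightarrow> nat \<Rightarrow> nat \<Rightarrow> real" where
  "odd_sum q N j = (\<Sum>k\<le>N. weighted_qbinom q N (Suc (2 * k)) * qbinom (q\<^sup>2) k j)"

lemma choose_two_Suc: "Suc x choose 2 = (x choose 2) + x"
  by (simp add: numeral_2_eq_2)

lemma weighted_qbinom_eq_0: "N < m \<Longrightarrow> weighted_qbinom q N m = 0"
  by (simp add: weighted_qbinom_def qbinom_eq_0)

lemma weighted_qbinom_Suc_0:
  "q \<noteq> -1 \<Longrightarrow> weighted_qbinom q (Suc N) 0 = q ^ N * weighted_qbinom q N 0"
  by (simp add: weighted_qbinom_def qbinom_0_right choose_two_Suc power_add)

lemma weighted_qbinom_Suc_Suc:
  assumes "q \<noteq> -1"
  shows "weighted_qbinom q (Suc N) (Suc m) = q ^ N * weighted_qbinom q N (Suc m) + weighted_qbinom q N m"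
proof (cases "m < N")
  case True
  then obtain d where N: "N = Suc m + d" using less_imp_Suc_add by blast
  show ?thesis
    unfolding weighted_qbinom_def qbinom_Suc_Suc[OF assms] unfolding N
    by (simp add: Suc_diff_le choose_two_Suc power_add algebra_simps)
next
  case False
  then consider "m = N" | "N < m" by linarith
  then show ?thesis
    by cases (simp_all add: weighted_qbinom_def qbinom_self[OF assms] qbinom_eq_0)
qed

lemma even_sum_atMost:
  "N \<le> M \<Longrightarrow> even_sum q N j = (\<Sum>k\<le>M. weighted_qbinom q N (2 * k) * qbinom (q\<^sup>2) k j)"
  unfolding even_sum_def
  by (rule sum.mono_neutral_left) (auto simp: weighted_qbinom_eq_0)

lemma odd_sum_atMost:
  "N \<le> M \<Longrightarrow> odd_sum q N j = (\<Sum>k\<le>M. weighted_qbinom q N (Suc (2 * k)) * qbinom (q\<^sup>2) k j)"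
  unfolding odd_sum_def
  by (rule sum.mono_neutral_left) (auto simp: weighted_qbinom_eq_0)

lemma odd_sum_0: "odd_sum q 0 j = 0"
  by (simp add: odd_sum_def weighted_qbinom_eq_0)

lemma odd_sum_Suc:
  assumes "q \<noteq> -1"
  shows "odd_sum q (Suc N) j = q ^ N * odd_sum q N j + even_sum q N j"
proof -
  have "odd_sum q (Suc N) j
      = (\<Sum>k\<le>Suc N. (q ^ N * weighted_qbinom q N (Suc (2 * k)) + weighted_qbinom q N (2 * k))
                      * qbinom (q\<^sup>2) k j)"
    unfolding odd_sum_def weighted_qbinom_Suc_Suc[OF assms] ..
  also have "\<dots> = q ^ N * odd_sum q N j + even_sum q N j"
    using odd_sum_atMost[of N "Suc N" q j] even_sum_atMost[of N "Suc N" q j]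
    by (simp add: sum.distrib sum_distrib_left algebra_simps)
  finally show ?thesis .
qed

lemma even_sum_Suc:
  assumes "q \<noteq> -1"
  shows "even_sum q (Suc N) j
       = q ^ N * even_sum q N j + (q\<^sup>2) ^ j * odd_sum q N j
         + (if j = 0 then 0 else odd_sum q N (j - 1))"
proof -
  have "even_sum q (Suc N) j = weighted_qbinom q (Suc N) 0 * qbinom (q\<^sup>2) 0 j
      + (\<Sum>k\<le>N. weighted_qbinom q (Suc N) (Suc (Suc (2 * k))) * qbinom (q\<^sup>2) (Suc k) j)"
    unfolding even_sum_def sum.atMost_Suc_shift by simp
  also have "\<dots> = q ^ N * (weighted_qbinom q N 0 * qbinom (q\<^sup>2) 0 j
      + (\<Sum>k\<le>N. weighted_qbinom q N (2 * Suc k) * qbinom (q\<^sup>2) (Suc k) j))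
      + (\<Sum>k\<le>N. weighted_qbinom q N (Suc (2 * k)) * qbinom (q\<^sup>2) (Suc k) j)"
    unfolding weighted_qbinom_Suc_0[OF assms] weighted_qbinom_Suc_Suc[OF assms]
    by (simp add: sum.distrib sum_distrib_left algebra_simps)
  also have "weighted_qbinom q N 0 * qbinom (q\<^sup>2) 0 j
      + (\<Sum>k\<le>N. weighted_qbinom q N (2 * Suc k) * qbinom (q\<^sup>2) (Suc k) j) = even_sum q N j"
    using even_sum_atMost[of N "Suc N" q j] unfolding sum.atMost_Suc_shift by simp
  also have "(\<Sum>k\<le>N. weighted_qbinom q N (Suc (2 * k)) * qbinom (q\<^sup>2) (Suc k) j)
      = (q\<^sup>2) ^ j * odd_sum q N j + (if j = 0 then 0 else odd_sum q N (j - 1))"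
    unfolding qbinom_Suc_left[OF power2_neq_minus_1] odd_sum_def
    by (simp add: sum.distrib sum_distrib_left algebra_simps)
  finally show ?thesis by simp
qed

lemma odd_sum_Suc_Suc:
  assumes "q \<noteq> -1"
  shows "odd_sum q (Suc (Suc n)) j
       = (q ^ Suc n + q ^ n) * odd_sum q (Suc n) j + ((q\<^sup>2) ^ j - (q\<^sup>2) ^ n) * odd_sum q n j
         + (if j = 0 then 0 else odd_sum q n (j - 1))"
proof -
  have even: "even_sum q n j = odd_sum q (Suc n) j - q ^ n * odd_sum q n j"
    using odd_sum_Suc[OF assms, of n j] by simp
  show ?thesis
    unfolding odd_sum_Suc[OF assms, of "Suc n"] even_sum_Suc[OF assms, of n] even
    by (simp add: algebra_simps power_mult[symmetric] power2_eq_square[symmetric] power_even_eq)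
qed

definition odd_sum_formula :: "real \<Rightarrow> nat \<Rightarrow> nat \<Rightarrow> real" where
  "odd_sum_formula q n j = neg_qpochhammer q (n - 2 * j) * qbinom (q\<^sup>2) (n - j) j"

lemma odd_sum_formula_1:
  "q \<noteq> -1 \<Longrightarrow> odd_sum_formula q 1 j = (1 + q) * odd_sum_formula q 0 j"
  by (cases j) (simp_all add: odd_sum_formula_def qbinom_0_right[OF power2_neq_minus_1]
      neg_qpochhammer_Suc qbinom_eq_0)

lemma odd_sum_formula_Suc_Suc_interior:
  assumes q: "q \<noteq> -1" and "j > 0" and n: "n = 2 * j + m"
  shows "odd_sum_formula q (Suc (Suc n)) j
       = q ^ Suc n * (1 + q) * odd_sum_formula q (Suc n) j
         + ((q\<^sup>2) ^ j - (q\<^sup>2) ^ Suc n) * odd_sum_formula q n j + odd_sum_formula q n (j - 1)"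
proof -
  define Q where "Q = q\<^sup>2"
  define N where "N = Suc (j + m)"
  define x where "x = qbinom Q N j"
  define y where "y = qbinom Q (j + m) j"
  define z where "z = qbinom Q N (j - 1)"
  define a where "a = q ^ Suc m"
  define b where "b = q ^ j"
  have "(1 - Q ^ Suc m) * x = (1 - Q ^ N) * y"
    unfolding x_def y_def N_def Q_def by (rule one_minus_power_mult_qbinom_Suc[OF power2_neq_minus_1])
  moreover have "Q ^ Suc m = a\<^sup>2" "Q ^ N = a\<^sup>2 * b\<^sup>2"
    unfolding Q_def N_def a_def b_def power_mult[symmetric] power_add[symmetric]
    by (simp_all add: algebra_simps)
  ultimately have xy: "(1 - a\<^sup>2) * x = (1 - a\<^sup>2 * b\<^sup>2) * y"
    by simp
  have pascal: "qbinom Q (Suc N) j = z + b\<^sup>2 * x"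
    using qbinom_Suc_Suc[OF power2_neq_minus_1, of q N "j - 1"] \<open>j > 0\<close>
    by (simp add: x_def z_def Q_def b_def power_mult[symmetric] mult.commute)
  have pochhammer: "neg_qpochhammer q (Suc (Suc m)) = neg_qpochhammer q m * (1 + a) * (1 + a * q)"
    "neg_qpochhammer q (Suc m) = neg_qpochhammer q m * (1 + a)"
    by (simp_all add: neg_qpochhammer_Suc a_def algebra_simps)
  have powers: "q ^ Suc n = a * b\<^sup>2" "(q\<^sup>2) ^ j = b\<^sup>2" "(q\<^sup>2) ^ Suc n = (a * b\<^sup>2)\<^sup>2"
    unfolding n a_def b_def power_mult[symmetric] power_add[symmetric]
    by (simp_all add: algebra_simps)
  have formula_values: "odd_sum_formula q (Suc (Suc n)) j = neg_qpochhammer q (Suc (Suc m)) * qbinom Q (Suc N) j"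
    "odd_sum_formula q (Suc n) j = neg_qpochhammer q (Suc m) * x"
    "odd_sum_formula q n j = neg_qpochhammer q m * y"
    "odd_sum_formula q n (j - 1) = neg_qpochhammer q (Suc (Suc m)) * z"
    using \<open>j > 0\<close> by (simp_all add: odd_sum_formula_def n N_def x_def y_def z_def Q_def
        Suc_diff_le numeral_2_eq_2)
  have "odd_sum_formula q (Suc (Suc n)) j
      - (q ^ Suc n * (1 + q) * odd_sum_formula q (Suc n) j
         + ((q\<^sup>2) ^ j - (q\<^sup>2) ^ Suc n) * odd_sum_formula q n j + odd_sum_formula q n (j - 1))
      = b\<^sup>2 * neg_qpochhammer q m * ((1 - a\<^sup>2) * x - (1 - a\<^sup>2 * b\<^sup>2) * y)"
    unfolding formula_values powers pascal pochhammer by (simp add: algebra_simps power2_eq_square)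
  with xy show ?thesis by simp
qed

lemma odd_sum_formula_Suc_Suc:
  assumes q: "q \<noteq> -1"
  shows "odd_sum_formula q (Suc (Suc n)) j
       = q ^ Suc n * (1 + q) * odd_sum_formula q (Suc n) j
         + ((q\<^sup>2) ^ j - (q\<^sup>2) ^ Suc n) * odd_sum_formula q n j
         + (if j = 0 then 0 else odd_sum_formula q n (j - 1))"
proof (cases j)
  case 0
  have "neg_qpochhammer q (Suc (Suc n))
      = q ^ Suc n * (1 + q) * neg_qpochhammer q (Suc n) + (1 - (q\<^sup>2) ^ Suc n) * neg_qpochhammer q n"
    unfolding neg_qpochhammer_Suc by (simp add: algebra_simps power2_eq_square power_mult_distrib)
  with 0 show ?thesis by (simp add: odd_sum_formula_def qbinom_0_right[OF power2_neq_minus_1])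
next
  case (Suc i)
  consider "n < 2 * i" | "n = 2 * i" | "n = 2 * i + 1" | m where "n = 2 * j + m"
  proof -
    have "n < 2 * i \<or> n = 2 * i \<or> n = 2 * i + 1 \<or> 2 * j \<le> n" using Suc by linarith
    with that show thesis by (metis le_Suc_ex)
  qed
  then show ?thesis
  proof cases
    case 1
    with Suc show ?thesis by (simp add: odd_sum_formula_def qbinom_eq_0)
  next
    case 2
    with Suc show ?thesis
      by (simp add: odd_sum_formula_def qbinom_eq_0 qbinom_self[OF power2_neq_minus_1])
  next
    case 3
    have "qbinom (q\<^sup>2) (Suc (Suc i)) (Suc i) = qbinom (q\<^sup>2) (Suc i) i + (q\<^sup>2) ^ Suc i"
      using qbinom_Suc_Suc[OF power2_neq_minus_1, of q "Suc i" i]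
      by (simp add: qbinom_self[OF power2_neq_minus_1])
    moreover have "q ^ Suc n = (q\<^sup>2) ^ Suc i"
      unfolding 3 power_mult[symmetric] by (simp add: algebra_simps)
    moreover have "odd_sum_formula q (Suc n) j = 1" "odd_sum_formula q n j = 0"
      using 3 Suc by (simp_all add: odd_sum_formula_def qbinom_self[OF power2_neq_minus_1] qbinom_eq_0)
    moreover have "odd_sum_formula q (Suc (Suc n)) j = (1 + q) * qbinom (q\<^sup>2) (Suc (Suc i)) (Suc i)"
      "odd_sum_formula q n i = (1 + q) * qbinom (q\<^sup>2) (Suc i) i"
      using 3 Suc by (simp_all add: odd_sum_formula_def neg_qpochhammer_Suc)
    ultimately show ?thesis using Suc by (simp add: algebra_simps)
  next
    case 4
    with Suc show ?thesis using odd_sum_formula_Suc_Suc_interior[OF q, of j n m] by simp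
  qed
qed

lemma odd_sum_1: "q \<noteq> -1 \<Longrightarrow> odd_sum q 1 j = odd_sum_formula q 0 j"
  using odd_sum_Suc[of q 0 j]
  by (simp add: odd_sum_0 even_sum_def weighted_qbinom_def odd_sum_formula_def qbinom_self
      binomial_eq_0)

lemma odd_sum_eq_formula:
  assumes q: "q \<noteq> -1"
  shows "odd_sum q (Suc n) j = odd_sum_formula q n j"
proof (induction n arbitrary: j rule: induct_nat_012)
  case 0
  show ?case using odd_sum_1[OF q] by simp
next
  case 1
  show ?case
    using odd_sum_Suc_Suc[OF q, of 0 j] odd_sum_1[OF q] odd_sum_formula_1[OF q]
    by (simp add: odd_sum_0 add.commute)
next
  case (ge2 n)
  show ?case
    unfolding odd_sum_Suc_Suc[OF q, of "Suc n"] odd_sum_formula_Suc_Suc[OF q, of n] ge2.IH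
    by (simp add: algebra_simps)
qed

lemma odd_sum_formula_closed_form:
  assumes "q \<noteq> -1"
  shows "odd_sum_formula q n j = (\<Prod>i=j+1..n-j. 1 + q ^ i) * qbinom q (n - j) j"
proof (cases "2 * j \<le> n")
  case True
  then have "n - 2 * j = (n - j) - j" "j \<le> n - j" by simp_all
  then show ?thesis
    unfolding odd_sum_formula_def
    using neg_qpochhammer_mult_qbinom_power2_base[OF assms, of j "n - j"] by simp
qed (simp add: odd_sum_formula_def qbinom_eq_0)

lemma one_plus_power_qbinom_diff:
  assumes p: "p \<noteq> -1" and "j \<le> M"
  shows "(1 + p ^ Suc M) * qbinom p (Suc M) j - p ^ (Suc M + j) * qbinom p M j
       = qint p (Suc M + j) / qint p (Suc M) * qbinom p (Suc M) j"
proof -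
  define N where "N = Suc M"
  define x where "x = qbinom p N j"
  define y where "y = qbinom p M j"
  have ratio: "qint p N * y = x * qint p (N - j)"
    using qbinom_Suc_mult_qint[OF p assms(2)] by (simp add: N_def x_def y_def)
  have qint_splits: "qint p (N + j) = qint p N + p ^ N * qint p j"
    "qint p N = qint p j + p ^ j * qint p (N - j)"
    using qint_add[of p N j] qint_add[of p j "N - j"] assms(2) by (simp_all add: N_def)
  have "((1 + p ^ N) * x - p ^ (N + j) * y) * qint p N
      = (1 + p ^ N) * x * qint p N - p ^ N * p ^ j * (qint p N * y)"
    by (simp add: power_add algebra_simps)
  also have "\<dots> = qint p (N + j) * x"
    unfolding ratio by (simp add: qint_splits algebra_simps)
  finally have "((1 + p ^ N) * x - p ^ (N + j) * y) * qint p N = qint p (N + j) * x" .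
  moreover have "qint p N \<noteq> 0" using qint_neq_0[OF p] by (simp add: N_def)
  ultimately show ?thesis
    unfolding N_def[symmetric] x_def[symmetric] y_def[symmetric] by (simp add: field_simps)
qed

lemma even_sum_eq_odd_sum_formula_diff:
  assumes q: "q \<noteq> -1"
  shows "even_sum q (Suc n) j = odd_sum_formula q (Suc n) j - q ^ Suc n * odd_sum_formula q n j"
  using odd_sum_Suc[OF q, of "Suc n" j] by (simp add: odd_sum_eq_formula[OF q])

lemma even_sum_eq_0: "n < 2 * j \<Longrightarrow> even_sum q n j = 0"
  unfolding even_sum_def
proof (rule sum.neutral, intro ballI)
  fix k
  assume "n < 2 * j"
  show "weighted_qbinom q n (2 * k) * qbinom (q\<^sup>2) k j = 0"
    using \<open>n < 2 * j\<close> by (cases "k < j") (simp_all add: qbinom_eq_0 weighted_qbinom_eq_0)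
qed

lemma even_sum_double:
  assumes q: "q \<noteq> -1" and "j > 0"
  shows "even_sum q (2 * j) j = 1"
proof -
  define n where "n = 2 * j - 1"
  have n: "2 * j = Suc n" using \<open>j > 0\<close> by (simp add: n_def)
  have "Suc n - j = j" using n by simp
  then have "odd_sum_formula q (Suc n) j = 1" "odd_sum_formula q n j = 0"
    using n by (simp_all add: odd_sum_formula_def qbinom_self[OF power2_neq_minus_1] qbinom_eq_0)
  then show ?thesis
    unfolding n even_sum_eq_odd_sum_formula_diff[OF q] by simp
qed

lemma even_sum_interior:
  assumes q: "q \<noteq> -1" and "2 * j < n"
  shows "even_sum q n j
       = (\<Prod>i=j+1..<n-j. 1 + q ^ i) * (qint q n / qint q (n - j)) * qbinom q (n - j) j"
proof -
  define M where "M = n - j - 1"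
  have M: "n - j = Suc M" "n = Suc M + j" "j \<le> M" using assms(2) by (simp_all add: M_def)
  have n: "n = Suc (M + j)" using M(2) by simp
  define P where "P = (\<Prod>i=j+1..<Suc M. 1 + q ^ i)"
  have "odd_sum_formula q n j = P * ((1 + q ^ Suc M) * qbinom q (Suc M) j)"
    unfolding odd_sum_formula_closed_form[OF q] M(1) P_def using M(3)
    by (simp add: prod.nat_ivl_Suc' atLeastLessThanSuc_atLeastAtMost)
  moreover have "odd_sum_formula q (M + j) j = P * qbinom q M j"
    unfolding odd_sum_formula_closed_form[OF q] P_def
    by (simp add: atLeastLessThanSuc_atLeastAtMost)
  ultimately have "even_sum q n j
      = P * ((1 + q ^ Suc M) * qbinom q (Suc M) j - q ^ (Suc M + j) * qbinom q M j)"
    unfolding n even_sum_eq_odd_sum_formula_diff[OF q] by (simp add: algebra_simps)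
  also have "\<dots> = P * (qint q n / qint q (Suc M) * qbinom q (Suc M) j)"
    using one_plus_power_qbinom_diff[OF q M(3)] unfolding M(2)[symmetric] by simp
  finally show ?thesis unfolding P_def M(1) by (simp only: mult.assoc)
qed

lemma even_sum_closed_form:
  assumes q: "q \<noteq> -1" and "j \<le> n"
  shows "even_sum q n j
       = (\<Prod>i=1..<n. 1 + q ^ i) / ((\<Prod>i=1..j. 1 + q ^ i) * (\<Prod>i=n-j..<n. 1 + q ^ i))
         * (if n = 0 \<and> j = 0 then 1 else qint q n / qint q (n - j)) * qbinom q (n - j) j"
proof -
  let ?P = "\<lambda>a b. \<Prod>i=a..<b. 1 + q ^ i"
  have P_neq_0: "?P a b \<noteq> 0" for a b
    using one_plus_power_neq_0[OF q] by (simp add: prod_zero_iff)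
  have P_concat: "?P a b * ?P b c = ?P a c" if "a \<le> b" "b \<le> c" for a b c
    using prod.atLeastLessThan_concat that by blast
  have P_closed: "(\<Prod>i=1..j. 1 + q ^ i) = ?P 1 (Suc j)"
    by (simp add: atLeastLessThanSuc_atLeastAtMost)
  consider "n = 0" | "0 < n" "n < 2 * j" | "0 < j" "n = 2 * j" | "2 * j < n"
    using assms(2) by linarith
  then show ?thesis
  proof cases
    case 1
    with assms(2) show ?thesis
      by (simp add: even_sum_def weighted_qbinom_def qbinom_self[OF q]
          qbinom_self[OF power2_neq_minus_1] binomial_eq_0)
  next
    case 2
    then show ?thesis by (simp add: even_sum_eq_0 qbinom_eq_0)
  next
    case 3
    have "(\<Prod>i=1..<n. 1 + q ^ i) = ?P 1 j * ?P j n"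
      using 3 P_concat[of 1 j n] by simp
    moreover have "(\<Prod>i=1..j. 1 + q ^ i) = ?P 1 j * (1 + q ^ j)"
      unfolding P_closed by (rule prod.atLeastLessThan_Suc) (use 3 in simp)
    moreover have "n - j = j" using 3 by simp
    ultimately have "(\<Prod>i=1..<n. 1 + q ^ i) / ((\<Prod>i=1..j. 1 + q ^ i) * (\<Prod>i=n-j..<n. 1 + q ^ i))
        = 1 / (1 + q ^ j)"
      using P_neq_0 by simp
    moreover have "qint q n / qint q (n - j) = 1 + q ^ j"
      using 3 qint_double[of q j] qint_neq_0[OF q, of j] by simp
    ultimately show ?thesis
      using 3 one_plus_power_neq_0[OF q, of j] by (simp add: even_sum_double[OF q] qbinom_self[OF q])
  next
    case 4
    have "(\<Prod>i=1..<n. 1 + q ^ i) = ?P 1 (Suc j) * ?P (j + 1) (n - j) * ?P (n - j) n"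
      using 4 P_concat[of 1 "Suc j" "n - j"] P_concat[of 1 "n - j" n] by simp
    then have "(\<Prod>i=1..<n. 1 + q ^ i) / ((\<Prod>i=1..j. 1 + q ^ i) * (\<Prod>i=n-j..<n. 1 + q ^ i))
        = ?P (j + 1) (n - j)"
      unfolding P_closed using P_neq_0 by (simp add: one_plus_power_neq_0[OF q])
    with 4 show ?thesis by (simp add: even_sum_interior[OF q])
  qed
qed

lemma sum_even_qbinom_eq_even_sum:
  "(\<Sum>k=0..n div 2. q ^ ((n - 2 * k) choose 2) * qbinom q n (2 * k) * qbinom (q\<^sup>2) k j)
   = even_sum q n j"
  unfolding even_sum_def weighted_qbinom_def
  by (rule sum.mono_neutral_left) (auto simp: qbinom_eq_0)

lemma sum_odd_qbinom_eq_odd_sum: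
  "(\<Sum>k=0..n div 2. q ^ ((n - 2 * k) choose 2) * qbinom q (n + 1) (2 * k + 1) * qbinom (q\<^sup>2) k j)
   = odd_sum q (Suc n) j"
  unfolding odd_sum_def weighted_qbinom_def
  by (rule sum.mono_neutral_cong_left) (auto simp: qbinom_eq_0)

theorem theorem2p8:
  fixes q :: real and n j :: nat
  assumes "q \<noteq> -1" and "j \<le> n"
  shows "((\<Sum>k=0..n div 2. q ^ ((n - 2*k) choose 2) * qbinom q n (2*k) * qbinom (q^2) k j)
           = (\<Prod>i=1..<n. 1 + q ^ i)
             / ((\<Prod>i=1..j. 1 + q ^ i) * (\<Prod>i=n-j..<n. 1 + q ^ i))
             * (if n = 0 \<and> j = 0 then 1 else qint q n / qint q (n - j))
             * qbinom q (n - j) j)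
       \<and> ((\<Sum>k=0..n div 2. q ^ ((n - 2*k) choose 2) * qbinom q (n+1) (2*k+1) * qbinom (q^2) k j)
           = (\<Prod>i=j+1..n-j. 1 + q ^ i) * qbinom q (n - j) j)"
  unfolding sum_even_qbinom_eq_even_sum sum_odd_qbinom_eq_odd_sum
    even_sum_closed_form[OF assms] odd_sum_eq_formula[OF assms(1)]
    odd_sum_formula_closed_form[OF assms(1)]
  by simp

end
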